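(* For a finite group $G$, $G=\tilde{\mathrm{F}}(G)$ if and only if the intersection of all maximal normal subgroups of $G$ coincides with $\Phi(G)$.
   Context: $\tilde{\mathrm{F}}(G)$ is defined by $\Phi(G)\subseteq\tilde{\mathrm{F}}(G)$ and $\tilde{\mathrm{F}}(G)/\Phi(G)=\mathrm{Soc}(G/\Phi(G))$, where $\Phi$ is the Frattini subgroup and $\mathrm{Soc}$ the socle. Maximal normal subgroups are proper. *)

theory Defs
  imports "HOL-Algebra.Algebra"
begin

definition maximal_subgroup :: "'a set \<Rightarrow> ('a, 'b) monoid_scheme \<Rightarrow> bool" where
  "maximal_subgroup M G \<longleftrightarrow> subgroup M G \<and> M \<noteq> carrier G \<and>
     (\<forall>K. subgroup K G \<and> M \<subseteq> K \<and> K \<noteq> carrier G \<longrightarrow> K = M)"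

text \<open>Frattini subgroup: intersection of all maximal subgroups (the whole group if there are none).\<close>
definition frattini :: "('a, 'b) monoid_scheme \<Rightarrow> 'a set" where
  "frattini G = carrier G \<inter> \<Inter> {M. maximal_subgroup M G}"

definition maximal_normal :: "'a set \<Rightarrow> ('a, 'b) monoid_scheme \<Rightarrow> bool" where
  "maximal_normal N G \<longleftrightarrow> N \<lhd> G \<and> N \<noteq> carrier G \<and>
     (\<forall>K. K \<lhd> G \<and> N \<subseteq> K \<and> K \<noteq> carrier G \<longrightarrow> K = N)"

definition minimal_normal :: "'a set \<Rightarrow> ('a, 'b) monoid_scheme \<Rightarrow> bool" where
  "minimal_normal N G \<longleftrightarrow> N \<lhd> G \<and> N \<noteq> {\<one>\<^bsub>G\<^esub>} \<and>
     (\<forall>K. K \<lhd> G \<and> K \<subseteq> N \<and> K \<noteq> {\<one>\<^bsub>G\<^esub>} \<longrightarrow> K = N)"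

definition socle :: "('a, 'b) monoid_scheme \<Rightarrow> 'a set" where
  "socle G = generate G (\<Union> {N. minimal_normal N G})"

text \<open>Generalised Fitting subgroup F~(G): the full preimage in G of Soc(G/Phi(G)),
  i.e. the union of the cosets of Phi(G) lying in Soc(G/Phi(G)).\<close>
definition gen_fitting :: "('a, 'b) monoid_scheme \<Rightarrow> 'a set" where
  "gen_fitting G = \<Union> (socle (G Mod frattini G))"

end

theory Submission
  imports Defs
begin

text \<open>Every maximal normal subgroup \<open>N\<close> of a finite group \<open>G\<close> contains \<open>\<Phi>(G)\<close>, since
  \<open>\<Phi>(G)N\<close> lies in a maximal subgroup containing \<open>N\<close>; and the maximal
  normal subgroups of \<open>G\<close> containing \<open>\<Phi>(G)\<close> correspond to those of \<open>G/\<Phi>(G)\<close>. So it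
  suffices to show that a finite group is its own socle iff its maximal normal subgroups
  intersect trivially.

  If they do, choose maximal normal subgroups \<open>M\<^sub>1, \<dots>, M\<^sub>k\<close> with trivial intersection and
  no redundant member. The intersection \<open>D\<^sub>i\<close> of all \<open>M\<^sub>j\<close> with \<open>j \<noteq> i\<close> is then a minimal
  normal subgroup with \<open>D\<^sub>i M\<^sub>i = G\<close>, and induction over the family shows that the \<open>D\<^sub>i\<close>
  generate \<open>G\<close>. Conversely, if \<open>G\<close> is its own socle and \<open>N\<close> is minimal normal, a normal
  subgroup \<open>L\<close> maximal subject to \<open>N \<inter> L = 1\<close> satisfies \<open>NL = G\<close>: otherwise some minimal
  normal subgroup \<open>N'\<close> meets \<open>NL\<close> trivially, and then \<open>N \<inter> LN' = 1\<close> contradicts the choice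
  of \<open>L\<close>. Hence \<open>L\<close> is a maximal normal subgroup avoiding \<open>N\<close>.\<close>

definition maximal_normal_Inter :: "('a, 'b) monoid_scheme \<Rightarrow> 'a set" where
  "maximal_normal_Inter G = carrier G \<inter> \<Inter>{N. maximal_normal N G}"

context group
begin

lemma finite_if_subsets_of_carrier:
  assumes "finite (carrier G)" and "\<And>H. H \<in> S \<Longrightarrow> H \<subseteq> carrier G"
  shows "finite S"
  using assms by (meson Pow_iff finite_Pow_iff finite_subset subsetI)

lemma normal_Inter_carrier:
  assumes "\<And>N. N \<in> S \<Longrightarrow> N \<lhd> G"
  shows "carrier G \<inter> \<Inter>S \<lhd> G"
proof (rule normal_invI)
  have "carrier G \<inter> \<Inter>S = \<Inter>(insert (carrier G) S)" by simp
  then show "subgroup (carrier G \<inter> \<Inter>S) G"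
    using subgroups_Inter[of "insert (carrier G) S"] assms normal_imp_subgroup subgroup_self
    by auto
next
  fix x h assume "x \<in> carrier G" "h \<in> carrier G \<inter> \<Inter>S"
  then show "x \<otimes> h \<otimes> inv x \<in> carrier G \<inter> \<Inter>S"
    using assms normal.inv_op_closed2 by fastforce
qed

lemma maximal_normal_Inter_normal: "maximal_normal_Inter G \<lhd> G"
  unfolding maximal_normal_Inter_def maximal_normal_def by (rule normal_Inter_carrier) blast

lemma subset_set_mult_left:
  assumes "H \<subseteq> carrier G" and "subgroup K G"
  shows "H \<subseteq> H <#> K"
proof
  fix h assume "h \<in> H"
  then have "h = h \<otimes> \<one>" and "\<one> \<in> K"
    using assms subgroup.one_closed by auto
  then show "h \<in> H <#> K"
    using \<open>h \<in> H\<close> unfolding set_mult_def by blast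
qed

lemma subset_set_mult_right:
  assumes "subgroup H G" and "K \<subseteq> carrier G"
  shows "K \<subseteq> H <#> K"
proof
  fix k assume "k \<in> K"
  then have "k = \<one> \<otimes> k" and "\<one> \<in> H"
    using assms subgroup.one_closed by auto
  then show "k \<in> H <#> K"
    using \<open>k \<in> K\<close> unfolding set_mult_def by blast
qed

lemma set_mult_subset_subgroup:
  assumes "subgroup K G" and "A \<subseteq> K" and "B \<subseteq> K"
  shows "A <#> B \<subseteq> K"
  using assms unfolding set_mult_def by (auto intro: subgroup.m_closed)

lemma set_mult_one: "H \<subseteq> carrier G \<Longrightarrow> H <#> {\<one>} = H"
  by (metis coset_mult_one r_coset_eq_set_mult)

lemma subset_set_mult_Int:
  assumes "subgroup I G" and "D \<subseteq> I" and "I \<subseteq> D <#> M" and "M \<subseteq> carrier G"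
  shows "I \<subseteq> D <#> (I \<inter> M)"
proof
  fix x assume x: "x \<in> I"
  then obtain d m where d: "d \<in> D" and m: "m \<in> M" and x_eq: "x = d \<otimes> m"
    using assms(3) unfolding set_mult_def by blast
  have "d \<in> carrier G" "m \<in> carrier G"
    using d m assms(1,2,4) subgroup.subset by blast+
  then have "m = inv d \<otimes> x"
    by (simp add: x_eq m_assoc[symmetric])
  moreover have "inv d \<in> I"
    using d assms(2) subgroup.m_inv_closed[OF assms(1)] by blast
  ultimately have "m \<in> I"
    using subgroup.m_closed[OF assms(1) _ x] by simp
  then show "x \<in> D <#> (I \<inter> M)"
    using d m unfolding x_eq set_mult_def by blast
qed

lemma Int_set_mult_trivial:
  assumes A: "subgroup A G" and B: "subgroup B G" and C: "subgroup C G"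
    and "A \<inter> B = {\<one>}" and "(A <#> B) \<inter> C = {\<one>}"
  shows "A \<inter> (B <#> C) = {\<one>}"
proof -
  have "x = \<one>" if x: "x \<in> A" "x \<in> B <#> C" for x
  proof -
    obtain b c where b: "b \<in> B" and c: "c \<in> C" and x_eq: "x = b \<otimes> c"
      using x(2) unfolding set_mult_def by blast
    have carr: "b \<in> carrier G" "c \<in> carrier G"
      using subgroup.mem_carrier[OF B b] subgroup.mem_carrier[OF C c] .
    then have "inv c = inv x \<otimes> b"
      by (simp add: x_eq inv_mult_group) (simp add: m_assoc)
    moreover have "inv x \<in> A"
      using subgroup.m_inv_closed[OF A x(1)] .
    ultimately have "inv c \<in> A <#> B"
      using b unfolding set_mult_def by blast
    moreover have "inv c \<in> C"
      using subgroup.m_inv_closed[OF C c] .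
    ultimately have "inv c = \<one>"
      using assms(5) by blast
    then have "c = \<one>"
      using carr(2) by (metis inv_inv inv_one)
    then have "x \<in> A \<inter> B"
      using x(1) b carr by (simp add: x_eq)
    then show "x = \<one>"
      using assms(4) by blast
  qed
  moreover have "\<one> \<in> A \<inter> (B <#> C)"
    using subgroup.one_closed[OF A] subset_set_mult_left[OF subgroup.subset[OF B] C]
      subgroup.one_closed[OF B] by blast
  ultimately show ?thesis by blast
qed

lemma minimal_normal_Int_trivial_or_subset:
  assumes "minimal_normal N G" and "K \<lhd> G"
  shows "N \<inter> K = {\<one>} \<or> N \<subseteq> K"
proof -
  have "N \<lhd> G" using assms(1) unfolding minimal_normal_def by blast
  then have "N \<inter> K \<lhd> G" using normal_subgroup_intersect assms(2) by blast
  then have "N \<inter> K = {\<one>} \<or> N \<inter> K = N"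
    using assms(1) unfolding minimal_normal_def by blast
  then show ?thesis by blast
qed

lemma socle_subgroup: "subgroup (socle G) G"
  unfolding socle_def minimal_normal_def
  by (rule generate_is_subgroup) (auto dest: normal_imp_subgroup subgroup.subset)

lemma minimal_normal_subset_socle: "minimal_normal N G \<Longrightarrow> N \<subseteq> socle G"
  unfolding socle_def by (auto intro: generate.incl)

lemma socle_subset_subgroup:
  assumes "subgroup K G" and "\<And>N. minimal_normal N G \<Longrightarrow> N \<subseteq> K"
  shows "socle G \<subseteq> K"
  unfolding socle_def using assms by (intro generate_subgroup_incl) auto

lemma exists_minimal_normal_subset:
  assumes fin: "finite (carrier G)" and "K \<lhd> G" and "K \<noteq> {\<one>}"
  obtains N where "minimal_normal N G" and "N \<subseteq> K"
proof -
  let ?S = "{N. N \<lhd> G \<and> N \<subseteq> K \<and> N \<noteq> {\<one>}}"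
  have "finite ?S"
    by (rule finite_if_subsets_of_carrier[OF fin]) (auto dest: normal_imp_subgroup subgroup.subset)
  moreover have "K \<in> ?S"
    using assms(2,3) by blast
  ultimately obtain N where N: "N \<in> ?S" and min: "\<forall>N' \<in> ?S. N' \<subseteq> N \<longrightarrow> N = N'"
    using finite_has_minimal2[of ?S K] by blast
  have "minimal_normal N G"
    unfolding minimal_normal_def
  proof (intro conjI allI impI)
    show "N \<lhd> G" "N \<noteq> {\<one>}" using N by simp_all
    fix K' assume "K' \<lhd> G \<and> K' \<subseteq> N \<and> K' \<noteq> {\<one>}"
    then show "K' = N" using N min by auto
  qed
  with N show thesis using that by simp
qed

lemma exists_maximal_subgroup_superset:
  assumes fin: "finite (carrier G)" and "subgroup H G" and "H \<noteq> carrier G"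
  obtains M where "maximal_subgroup M G" and "H \<subseteq> M"
proof -
  let ?S = "{M. subgroup M G \<and> H \<subseteq> M \<and> M \<noteq> carrier G}"
  have "finite ?S"
    by (rule finite_if_subsets_of_carrier[OF fin]) (auto dest: subgroup.subset)
  moreover have "H \<in> ?S"
    using assms(2,3) by blast
  ultimately obtain M where M: "M \<in> ?S" and max: "\<forall>M' \<in> ?S. M \<subseteq> M' \<longrightarrow> M = M'"
    using finite_has_maximal2[of ?S H] by blast
  have "maximal_subgroup M G"
    unfolding maximal_subgroup_def
  proof (intro conjI allI impI)
    show "subgroup M G" "M \<noteq> carrier G" using M by simp_all
    fix K assume "subgroup K G \<and> M \<subseteq> K \<and> K \<noteq> carrier G"
    then show "K = M" using M max by auto
  qed
  with M show thesis using that by simp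
qed

lemma exists_maximal_normal_Int_trivial:
  assumes fin: "finite (carrier G)" and "N \<lhd> G"
  obtains L where "L \<lhd> G" and "N \<inter> L = {\<one>}"
    and "\<And>L'. L' \<lhd> G \<Longrightarrow> N \<inter> L' = {\<one>} \<Longrightarrow> L \<subseteq> L' \<Longrightarrow> L' = L"
proof -
  let ?S = "{L. L \<lhd> G \<and> N \<inter> L = {\<one>}}"
  have "finite ?S"
    by (rule finite_if_subsets_of_carrier[OF fin]) (auto dest: normal_imp_subgroup subgroup.subset)
  moreover have "{\<one>} \<in> ?S"
    using one_is_normal subgroup.one_closed[OF normal_imp_subgroup[OF assms(2)]] by blast
  ultimately obtain L where L: "L \<in> ?S" and max: "\<forall>L' \<in> ?S. L \<subseteq> L' \<longrightarrow> L = L'"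
    using finite_has_maximal2[of ?S "{\<one>}"] by blast
  show thesis
  proof (rule that)
    show "L \<lhd> G" "N \<inter> L = {\<one>}" using L by simp_all
    fix L' assume "L' \<lhd> G" "N \<inter> L' = {\<one>}" "L \<subseteq> L'"
    then show "L' = L" using max by blast
  qed
qed

lemma frattini_subgroup: "subgroup (frattini G) G"
proof -
  have "frattini G = \<Inter>(insert (carrier G) {M. maximal_subgroup M G})"
    unfolding frattini_def by simp
  then show ?thesis
    using subgroups_Inter[of "insert (carrier G) {M. maximal_subgroup M G}"] subgroup_self
    unfolding maximal_subgroup_def by auto
qed

lemma maximal_subgroup_conjugate:
  assumes g: "g \<in> carrier G" and M: "maximal_subgroup M G"
  shows "maximal_subgroup (inv g <# M #> g) G"
proof -
  define c where "c A = inv g <# A #> g" for A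
  define c' where "c' A = g <# A #> inv g" for A
  have c'_c: "c' (c A) = A" and c_c': "c (c' A) = A" if "A \<subseteq> carrier G" for A
    unfolding c_def c'_def
    using subgroup_conjugation_is_surj0[OF inv_closed[OF g] that]
      subgroup_conjugation_is_surj0[OF g that] g by simp_all
  have mono: "c A \<subseteq> c B" "c' A \<subseteq> c' B" if "A \<subseteq> B" for A B
    unfolding c_def c'_def l_coset_def r_coset_def using that by blast+
  have subgroup: "subgroup (c A) G" "subgroup (c' A) G" if "subgroup A G" for A
    unfolding c_def c'_def
    using subgroup_conjugation_is_surj1[OF g that]
      subgroup_conjugation_is_surj1[OF inv_closed[OF g] that] g by simp_all
  have c_carrier: "c (carrier G) = carrier G" and c'_carrier: "c' (carrier G) = carrier G"
    using c'_c c_c' mono subgroup[OF subgroup_self] subgroup.subset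
    by (metis subset_antisym subset_refl)+
  have M_sub: "subgroup M G" and M_ne: "M \<noteq> carrier G"
    using M unfolding maximal_subgroup_def by blast+
  have M_carr: "M \<subseteq> carrier G" using subgroup.subset[OF M_sub] .
  show ?thesis
    unfolding maximal_subgroup_def c_def[symmetric]
  proof (intro conjI allI impI)
    show "subgroup (c M) G" using subgroup(1)[OF M_sub] .
    show "c M \<noteq> carrier G"
      using c'_c[OF M_carr] c'_carrier M_ne by auto
    fix K assume K: "subgroup K G \<and> c M \<subseteq> K \<and> K \<noteq> carrier G"
    then have K_carr: "K \<subseteq> carrier G" using subgroup.subset by blast
    have "c' K = M"
      using M K subgroup(2) mono(2)[of "c M" K] c'_c[OF M_carr] c_c'[OF K_carr] c_carrier
      unfolding maximal_subgroup_def by metis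
    then show "K = c M" using c_c'[OF K_carr] by simp
  qed
qed

lemma frattini_normal: "frattini G \<lhd> G"
proof (rule normal_invI)
  show "subgroup (frattini G) G" by (rule frattini_subgroup)
  fix x h assume x: "x \<in> carrier G" and h: "h \<in> frattini G"
  have "x \<otimes> h \<otimes> inv x \<in> M" if M: "maximal_subgroup M G" for M
  proof -
    have "h \<in> inv x <# M #> x"
      using h maximal_subgroup_conjugate[OF x M] unfolding frattini_def by blast
    then obtain m where m: "m \<in> M" and h_eq: "h = inv x \<otimes> m \<otimes> x"
      unfolding l_coset_def r_coset_def by blast
    have "m \<in> carrier G"
      using m M subgroup.subset unfolding maximal_subgroup_def by blast
    then have "x \<otimes> h \<otimes> inv x = m"
      using x by (simp add: h_eq m_assoc[symmetric]) (simp add: m_assoc)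
    then show ?thesis using m by simp
  qed
  then show "x \<otimes> h \<otimes> inv x \<in> frattini G"
    using x h unfolding frattini_def by blast
qed

lemma maximal_normal_set_mult_eq_carrier:
  assumes M: "maximal_normal M G" and K: "K \<lhd> G" and "\<not> K \<subseteq> M"
  shows "K <#> M = carrier G"
proof (rule ccontr)
  have M_normal: "M \<lhd> G" using M unfolding maximal_normal_def by blast
  have K_sub: "subgroup K G" and M_sub: "subgroup M G"
    using K M_normal by (simp_all add: normal_imp_subgroup)
  assume "K <#> M \<noteq> carrier G"
  moreover have "K <#> M \<lhd> G"
    using normal_subgroup_set_mult_closed[OF K M_normal] .
  moreover have "M \<subseteq> K <#> M"
    using subset_set_mult_right[OF K_sub subgroup.subset[OF M_sub]] .
  ultimately have "K <#> M = M"
    using M unfolding maximal_normal_def by blast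
  then have "K \<subseteq> M"
    using subset_set_mult_left[OF subgroup.subset[OF K_sub] M_sub] by simp
  with \<open>\<not> K \<subseteq> M\<close> show False ..
qed

lemma frattini_subset_maximal_normal:
  assumes fin: "finite (carrier G)" and N: "maximal_normal N G"
  shows "frattini G \<subseteq> N"
proof (rule ccontr)
  have N_normal: "N \<lhd> G" and N_ne: "N \<noteq> carrier G"
    using N unfolding maximal_normal_def by blast+
  obtain M where M: "maximal_subgroup M G" and "N \<subseteq> M"
    using exists_maximal_subgroup_superset[OF fin normal_imp_subgroup[OF N_normal] N_ne] .
  have M_sub: "subgroup M G" and "M \<noteq> carrier G"
    using M unfolding maximal_subgroup_def by blast+
  moreover have "frattini G \<subseteq> M"
    using M unfolding frattini_def by blast
  ultimately have "frattini G <#> N \<noteq> carrier G"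
    using set_mult_subset_subgroup[OF M_sub _ \<open>N \<subseteq> M\<close>] subgroup.subset[OF M_sub] by blast
  moreover assume "\<not> frattini G \<subseteq> N"
  ultimately show False
    using maximal_normal_set_mult_eq_carrier[OF N frattini_normal] by blast
qed

lemma Inter_all_but_one_minimal_normal:
  assumes F: "\<And>M. M \<in> F \<Longrightarrow> maximal_normal M G"
    and F_trivial: "carrier G \<inter> \<Inter>F = {\<one>}"
    and M: "M \<in> F" and irredundant: "carrier G \<inter> \<Inter>(F - {M}) \<noteq> {\<one>}"
  defines "D \<equiv> carrier G \<inter> \<Inter>(F - {M})"
  shows "minimal_normal D G" and "D <#> M = carrier G"
proof -
  have D_normal: "D \<lhd> G"
    unfolding D_def by (rule normal_Inter_carrier) (use F in \<open>auto simp: maximal_normal_def\<close>)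
  have M_normal: "M \<lhd> G"
    using F[OF M] unfolding maximal_normal_def by blast
  have M_sub: "subgroup M G" and D_sub: "subgroup D G"
    using M_normal D_normal by (simp_all add: normal_imp_subgroup)
  have "D \<inter> M \<subseteq> {\<one>}"
    using F_trivial M unfolding D_def by blast
  then have D_M: "D \<inter> M = {\<one>}"
    using subgroup.one_closed[OF D_sub] subgroup.one_closed[OF M_sub] by blast
  have fills: "K <#> M = carrier G" if K: "K \<lhd> G" "K \<subseteq> D" "K \<noteq> {\<one>}" for K
  proof -
    have "\<not> K \<subseteq> M"
      using D_M K(2,3) subgroup.one_closed[OF normal_imp_subgroup[OF K(1)]] by blast
    then show ?thesis
      using maximal_normal_set_mult_eq_carrier[OF F[OF M] K(1)] by blast
  qed
  show "D <#> M = carrier G"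
    using fills[OF D_normal subset_refl] irredundant unfolding D_def by blast
  show "minimal_normal D G"
    unfolding minimal_normal_def
  proof (intro conjI allI impI)
    show "D \<lhd> G" "D \<noteq> {\<one>}" using D_normal irredundant unfolding D_def by simp_all
    fix K assume K: "K \<lhd> G \<and> K \<subseteq> D \<and> K \<noteq> {\<one>}"
    have "D \<subseteq> K <#> (D \<inter> M)"
      using fills K subgroup.subset[OF D_sub] subgroup.subset[OF M_sub]
      by (intro subset_set_mult_Int[OF D_sub]) auto
    also have "\<dots> = K"
      using D_M K subgroup.subset[OF normal_imp_subgroup] set_mult_one by metis
    finally show "K = D" using K by blast
  qed
qed

lemma carrier_subset_socle_set_mult_Inter:
  assumes F: "\<And>M. M \<in> F \<Longrightarrow> maximal_normal M G" and "finite F"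
    and F_trivial: "carrier G \<inter> \<Inter>F = {\<one>}"
    and irredundant: "\<And>M. M \<in> F \<Longrightarrow> carrier G \<inter> \<Inter>(F - {M}) \<noteq> {\<one>}"
    and "F' \<subseteq> F"
  shows "carrier G \<subseteq> socle G <#> (carrier G \<inter> \<Inter>F')"
  using finite_subset[OF \<open>F' \<subseteq> F\<close> \<open>finite F\<close>] \<open>F' \<subseteq> F\<close>
proof (induction F' rule: finite_induct)
  case empty
  show ?case using subset_set_mult_right[OF socle_subgroup subset_refl] by simp
next
  case (insert M F')
  let ?I = "carrier G \<inter> \<Inter>F'"
  let ?D = "carrier G \<inter> \<Inter>(F - {M})"
  have M: "M \<in> F" using insert.prems by blast
  have M_carr: "M \<subseteq> carrier G"
    using F[OF M] unfolding maximal_normal_def by (blast dest: normal_imp_subgroup subgroup.subset)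
  have I_sub: "subgroup ?I G"
    using insert.prems F by (intro normal_imp_subgroup normal_Inter_carrier)
      (auto simp: maximal_normal_def)
  have D_min: "minimal_normal ?D G" and D_fills: "?D <#> M = carrier G"
    using Inter_all_but_one_minimal_normal[OF F F_trivial M irredundant[OF M]] by auto
  have D_carr: "?D \<subseteq> carrier G" by blast
  have I_split: "?I \<subseteq> ?D <#> (?I \<inter> M)"
    using insert.hyps(2) insert.prems D_fills M_carr subgroup.subset[OF I_sub]
    by (intro subset_set_mult_Int[OF I_sub]) auto
  have "carrier G \<subseteq> socle G <#> ?I"
    using insert by blast
  also have "\<dots> \<subseteq> socle G <#> (?D <#> (?I \<inter> M))"
    by (rule mono_set_mult[OF subset_refl I_split])
  also have "\<dots> = (socle G <#> ?D) <#> (?I \<inter> M)"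
    using subgroup.subset[OF socle_subgroup] M_carr
    by (intro set_mult_assoc[symmetric]) auto
  also have "\<dots> \<subseteq> socle G <#> (?I \<inter> M)"
    using set_mult_subset_subgroup[OF socle_subgroup subset_refl minimal_normal_subset_socle[OF D_min]]
    by (rule mono_set_mult) simp
  also have "?I \<inter> M = carrier G \<inter> \<Inter>(insert M F')" by blast
  finally show ?case .
qed

lemma socle_eq_carrier_if_maximal_normal_Inter_trivial:
  assumes fin: "finite (carrier G)" and trivial: "maximal_normal_Inter G = {\<one>}"
  shows "socle G = carrier G"
proof -
  define Max where "Max = {N. maximal_normal N G}"
  define S where "S = {F. F \<subseteq> Max \<and> carrier G \<inter> \<Inter>F = {\<one>}}"
  have "finite Max"
    unfolding Max_def by (rule finite_if_subsets_of_carrier[OF fin])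
      (auto simp: maximal_normal_def dest: normal_imp_subgroup subgroup.subset)
  moreover have "S \<subseteq> Pow Max"
    unfolding S_def by blast
  ultimately have "finite S"
    using finite_subset by blast
  moreover have "Max \<in> S"
    using trivial unfolding S_def Max_def maximal_normal_Inter_def by simp
  ultimately obtain F where F_in: "F \<in> S" and min: "\<forall>F' \<in> S. F' \<subseteq> F \<longrightarrow> F = F'"
    using finite_has_minimal2[of S Max] by blast
  then have F_sub: "F \<subseteq> Max" and F_trivial: "carrier G \<inter> \<Inter>F = {\<one>}"
    unfolding S_def by simp_all
  then have F: "\<And>M. M \<in> F \<Longrightarrow> maximal_normal M G"
    unfolding Max_def by blast
  have "finite F"
    using finite_subset[OF F_sub \<open>finite Max\<close>] .
  have irredundant: "carrier G \<inter> \<Inter>(F - {M}) \<noteq> {\<one>}" if "M \<in> F" for M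
  proof
    assume "carrier G \<inter> \<Inter>(F - {M}) = {\<one>}"
    then have "F - {M} \<in> S"
      using F_sub unfolding S_def by blast
    then have "F = F - {M}"
      using min by blast
    then show False using that by blast
  qed
  have "carrier G \<subseteq> socle G <#> {\<one>}"
    using carrier_subset_socle_set_mult_Inter[OF F \<open>finite F\<close> F_trivial irredundant subset_refl]
      F_trivial by simp
  also have "\<dots> = socle G"
    using set_mult_one[OF subgroup.subset[OF socle_subgroup]] .
  finally show ?thesis
    using subgroup.subset[OF socle_subgroup] by blast
qed

lemma set_mult_eq_carrier_if_maximal_Int_trivial:
  assumes socle: "socle G = carrier G" and N_normal: "N \<lhd> G" and L_normal: "L \<lhd> G"
    and N_L: "N \<inter> L = {\<one>}"
    and L_max: "\<And>L'. L' \<lhd> G \<Longrightarrow> N \<inter> L' = {\<one>} \<Longrightarrow> L \<subseteq> L' \<Longrightarrow> L' = L"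
  shows "N <#> L = carrier G"
proof (rule ccontr)
  define P where "P = N <#> L"
  have N_sub: "subgroup N G" and L_sub: "subgroup L G"
    using N_normal L_normal by (simp_all add: normal_imp_subgroup)
  have P_normal: "P \<lhd> G"
    unfolding P_def using normal_subgroup_set_mult_closed[OF N_normal L_normal] .
  assume "N <#> L \<noteq> carrier G"
  then have "\<not> socle G \<subseteq> P"
    using socle subgroup.subset[OF normal_imp_subgroup[OF P_normal]] unfolding P_def by blast
  then obtain N' where N': "minimal_normal N' G" and "\<not> N' \<subseteq> P"
    using socle_subset_subgroup[OF normal_imp_subgroup[OF P_normal]] by blast
  then have "P \<inter> N' = {\<one>}"
    using minimal_normal_Int_trivial_or_subset[OF N' P_normal] by blast
  have N'_normal: "N' \<lhd> G" using N' unfolding minimal_normal_def by blast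
  have N'_sub: "subgroup N' G" using normal_imp_subgroup[OF N'_normal] .
  have "N \<inter> (L <#> N') = {\<one>}"
    using Int_set_mult_trivial[OF N_sub L_sub N'_sub N_L] \<open>P \<inter> N' = {\<one>}\<close>
    unfolding P_def by blast
  moreover have "L <#> N' \<lhd> G"
    using normal_subgroup_set_mult_closed[OF L_normal N'_normal] .
  moreover have "L \<subseteq> L <#> N'"
    using subset_set_mult_left[OF subgroup.subset[OF L_sub] N'_sub] .
  ultimately have "L <#> N' = L"
    using L_max by blast
  then have "N' \<subseteq> L"
    using subset_set_mult_right[OF L_sub subgroup.subset[OF N'_sub]] by simp
  moreover have "L \<subseteq> P"
    unfolding P_def using subset_set_mult_right[OF N_sub subgroup.subset[OF L_sub]] .
  ultimately show False
    using \<open>\<not> N' \<subseteq> P\<close> by blast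
qed

lemma exists_maximal_normal_Int_minimal_normal_trivial:
  assumes fin: "finite (carrier G)" and socle: "socle G = carrier G"
    and N: "minimal_normal N G"
  obtains L where "maximal_normal L G" and "N \<inter> L = {\<one>}"
proof -
  have N_normal: "N \<lhd> G" and N_nontrivial: "N \<noteq> {\<one>}"
    using N unfolding minimal_normal_def by blast+
  obtain L where L_normal: "L \<lhd> G" and N_L: "N \<inter> L = {\<one>}"
    and L_max: "\<And>L'. L' \<lhd> G \<Longrightarrow> N \<inter> L' = {\<one>} \<Longrightarrow> L \<subseteq> L' \<Longrightarrow> L' = L"
    using exists_maximal_normal_Int_trivial[OF fin N_normal] by blast
  have N_L_carrier: "N <#> L = carrier G"
    using set_mult_eq_carrier_if_maximal_Int_trivial[OF socle N_normal L_normal N_L L_max] .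
  have "maximal_normal L G"
    unfolding maximal_normal_def
  proof (intro conjI allI impI)
    show "L \<lhd> G" by (rule L_normal)
    show "L \<noteq> carrier G"
      using N_L N_nontrivial subgroup.subset[OF normal_imp_subgroup[OF N_normal]] by blast
    fix K assume K: "K \<lhd> G \<and> L \<subseteq> K \<and> K \<noteq> carrier G"
    consider "N \<inter> K = {\<one>}" | "N \<subseteq> K"
      using minimal_normal_Int_trivial_or_subset[OF N] K by blast
    then show "K = L"
    proof cases
      case 1
      then show ?thesis using L_max K by blast
    next
      case 2
      then have "N <#> L \<subseteq> K"
        using K by (intro set_mult_subset_subgroup normal_imp_subgroup) auto
      then show ?thesis
        using K N_L_carrier subgroup.subset[OF normal_imp_subgroup] by blast
    qed
  qed
  with N_L show thesis using that by blast
qed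

lemma maximal_normal_Inter_trivial_if_socle_eq_carrier:
  assumes fin: "finite (carrier G)" and socle: "socle G = carrier G"
  shows "maximal_normal_Inter G = {\<one>}"
proof (rule ccontr)
  assume "maximal_normal_Inter G \<noteq> {\<one>}"
  then obtain N where N: "minimal_normal N G" and N_Inter: "N \<subseteq> maximal_normal_Inter G"
    using exists_minimal_normal_subset[OF fin maximal_normal_Inter_normal] by blast
  obtain L where "maximal_normal L G" and "N \<inter> L = {\<one>}"
    using exists_maximal_normal_Int_minimal_normal_trivial[OF fin socle N] .
  then have "N = {\<one>}"
    using N_Inter unfolding maximal_normal_Inter_def by blast
  with N show False
    unfolding minimal_normal_def by blast
qed

lemma socle_eq_carrier_iff_maximal_normal_Inter_trivial:
  assumes "finite (carrier G)"
  shows "socle G = carrier G \<longleftrightarrow> maximal_normal_Inter G = {\<one>}"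
  using assms maximal_normal_Inter_trivial_if_socle_eq_carrier
    socle_eq_carrier_if_maximal_normal_Inter_trivial by blast

end

context normal
begin

lemma is_normal: "H \<lhd> G"
  using normal_axioms subgroup_axioms is_group by (simp add: normal_def)

lemma subset_Union_subgroup: "subgroup A (G Mod H) \<Longrightarrow> H \<subseteq> \<Union>A"
  using subgroup.one_closed[of A "G Mod H"] by auto

lemma Union_carrier_FactGroup: "\<Union>(carrier (G Mod H)) = carrier G"
  unfolding FactGroup_def using rcosets_part_G[OF subgroup_axioms] by simp

lemma Union_subset_Union_iff:
  assumes A: "subgroup A (G Mod H)" and B: "subgroup B (G Mod H)"
  shows "\<Union>A \<subseteq> \<Union>B \<longleftrightarrow> A \<subseteq> B"
proof
  assume AB: "\<Union>A \<subseteq> \<Union>B"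
  show "A \<subseteq> B"
  proof
    fix C assume "C \<in> A"
    then have "C \<in> carrier (G Mod H)"
      using subgroup.subset[OF A] by blast
    then obtain x where x: "x \<in> carrier G" and C: "C = H #> x"
      unfolding carrier_FactGroup by blast
    have "x \<in> \<Union>B"
      using \<open>C \<in> A\<close> rcos_self[OF x subgroup_axioms] C AB by blast
    then show "C \<in> B"
      using factgroup_subgroup_union_char[OF B] C by blast
  qed
qed blast

lemma Union_subgroup_inj:
  assumes "subgroup A (G Mod H)" and "subgroup B (G Mod H)" and "\<Union>A = \<Union>B"
  shows "A = B"
  using Union_subset_Union_iff[OF assms(1,2)] Union_subset_Union_iff[OF assms(2,1)] assms(3)
  by blast

lemma Union_eq_carrier_iff:
  assumes "subgroup A (G Mod H)"
  shows "\<Union>A = carrier G \<longleftrightarrow> A = carrier (G Mod H)"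
  using Union_subgroup_inj[OF assms group.subgroup_self[OF factorgroup_is_group]]
    Union_carrier_FactGroup by auto

lemma Union_eq_iff_trivial:
  assumes "subgroup A (G Mod H)"
  shows "\<Union>A = H \<longleftrightarrow> A = {\<one>\<^bsub>G Mod H\<^esub>}"
  using Union_subgroup_inj[OF assms group.triv_subgroup[OF factorgroup_is_group]] by auto

lemma normal_rcosets_FactGroup:
  assumes K: "K \<lhd> G" and "H \<subseteq> K"
  shows "rcosets\<^bsub>G\<lparr>carrier := K\<rparr>\<^esub> H \<lhd> G Mod H"
    and "\<Union>(rcosets\<^bsub>G\<lparr>carrier := K\<rparr>\<^esub> H) = K"
proof -
  have K_sub: "subgroup K G" using normal_imp_subgroup[OF K] .
  show "rcosets\<^bsub>G\<lparr>carrier := K\<rparr>\<^esub> H \<lhd> G Mod H"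
    using normality_factorization[OF is_normal \<open>H \<subseteq> K\<close> K] .
  show "\<Union>(rcosets\<^bsub>G\<lparr>carrier := K\<rparr>\<^esub> H) = K"
    using group.rcosets_part_G[OF subgroup_imp_group[OF K_sub]
        subgroup_incl[OF subgroup_axioms K_sub \<open>H \<subseteq> K\<close>]]
    by simp
qed

lemma maximal_normal_Union:
  assumes A: "maximal_normal A (G Mod H)"
  shows "maximal_normal (\<Union>A) G"
proof -
  have A_normal: "A \<lhd> G Mod H" and A_ne: "A \<noteq> carrier (G Mod H)"
    and A_max: "\<And>B. B \<lhd> G Mod H \<Longrightarrow> A \<subseteq> B \<Longrightarrow> B \<noteq> carrier (G Mod H) \<Longrightarrow> B = A"
    using A unfolding maximal_normal_def by blast+
  have A_sub: "subgroup A (G Mod H)" using normal_imp_subgroup[OF A_normal] .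
  show ?thesis
    unfolding maximal_normal_def
  proof (intro conjI allI impI)
    show "\<Union>A \<lhd> G" by (rule factgroup_subgroup_union_normal[OF A_normal])
    show "\<Union>A \<noteq> carrier G" using Union_eq_carrier_iff[OF A_sub] A_ne by simp
    fix K assume K: "K \<lhd> G \<and> \<Union>A \<subseteq> K \<and> K \<noteq> carrier G"
    then have "H \<subseteq> K" using subset_Union_subgroup[OF A_sub] by blast
    define B where "B = rcosets\<^bsub>G\<lparr>carrier := K\<rparr>\<^esub> H"
    have B_normal: "B \<lhd> G Mod H" and B_Union: "\<Union>B = K"
      unfolding B_def using normal_rcosets_FactGroup K \<open>H \<subseteq> K\<close> by blast+
    have B_sub: "subgroup B (G Mod H)" using normal_imp_subgroup[OF B_normal] .
    have "A \<subseteq> B"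
      using Union_subset_Union_iff[OF A_sub B_sub] B_Union K by simp
    moreover have "B \<noteq> carrier (G Mod H)"
      using Union_eq_carrier_iff[OF B_sub] B_Union K by simp
    ultimately have "B = A" using A_max B_normal by blast
    then show "K = \<Union>A" using B_Union by simp
  qed
qed

lemma maximal_normal_rcosets:
  assumes N: "maximal_normal N G" and "H \<subseteq> N"
  shows "maximal_normal (rcosets\<^bsub>G\<lparr>carrier := N\<rparr>\<^esub> H) (G Mod H)"
proof -
  have N_normal: "N \<lhd> G" and N_ne: "N \<noteq> carrier G"
    and N_max: "\<And>K. K \<lhd> G \<Longrightarrow> N \<subseteq> K \<Longrightarrow> K \<noteq> carrier G \<Longrightarrow> K = N"
    using N unfolding maximal_normal_def by blast+
  define A where "A = rcosets\<^bsub>G\<lparr>carrier := N\<rparr>\<^esub> H"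
  have A_normal: "A \<lhd> G Mod H" and A_Union: "\<Union>A = N"
    unfolding A_def using normal_rcosets_FactGroup N_normal \<open>H \<subseteq> N\<close> by blast+
  have A_sub: "subgroup A (G Mod H)" using normal_imp_subgroup[OF A_normal] .
  show ?thesis
    unfolding maximal_normal_def A_def[symmetric]
  proof (intro conjI allI impI)
    show "A \<lhd> G Mod H" by (rule A_normal)
    show "A \<noteq> carrier (G Mod H)" using Union_eq_carrier_iff[OF A_sub] A_Union N_ne by simp
    fix B assume B: "B \<lhd> G Mod H \<and> A \<subseteq> B \<and> B \<noteq> carrier (G Mod H)"
    then have B_sub: "subgroup B (G Mod H)" using normal_imp_subgroup by blast
    have "\<Union>B \<lhd> G" using factgroup_subgroup_union_normal B by blast
    moreover have "N \<subseteq> \<Union>B" using B A_Union by blast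
    moreover have "\<Union>B \<noteq> carrier G" using Union_eq_carrier_iff[OF B_sub] B by simp
    ultimately have "\<Union>B = \<Union>A" using N_max A_Union by blast
    then show "B = A" using Union_subgroup_inj[OF B_sub A_sub] by blast
  qed
qed

lemma Union_image_maximal_normal:
  assumes H_max: "\<And>N. maximal_normal N G \<Longrightarrow> H \<subseteq> N"
  shows "Union ` {A. maximal_normal A (G Mod H)} = {N. maximal_normal N G}"
proof
  show "Union ` {A. maximal_normal A (G Mod H)} \<subseteq> {N. maximal_normal N G}"
    using maximal_normal_Union by blast
  show "{N. maximal_normal N G} \<subseteq> Union ` {A. maximal_normal A (G Mod H)}"
  proof
    fix N assume "N \<in> {N. maximal_normal N G}"
    then have N: "maximal_normal N G" by simp
    then have "N = \<Union>(rcosets\<^bsub>G\<lparr>carrier := N\<rparr>\<^esub> H)"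
      using normal_rcosets_FactGroup(2) H_max unfolding maximal_normal_def by simp
    moreover have "rcosets\<^bsub>G\<lparr>carrier := N\<rparr>\<^esub> H \<in> {A. maximal_normal A (G Mod H)}"
      using maximal_normal_rcosets[OF N H_max[OF N]] by simp
    ultimately show "N \<in> Union ` {A. maximal_normal A (G Mod H)}" by (rule image_eqI)
  qed
qed

lemma maximal_normal_Inter_FactGroup:
  assumes H_max: "\<And>N. maximal_normal N G \<Longrightarrow> H \<subseteq> N"
  shows "maximal_normal_Inter (G Mod H) = {\<one>\<^bsub>G Mod H\<^esub>} \<longleftrightarrow> maximal_normal_Inter G = H"
proof -
  interpret Q: group "G Mod H" by (rule factorgroup_is_group)
  define R where "R = maximal_normal_Inter (G Mod H)"
  define MQ where "MQ = {A. maximal_normal A (G Mod H)}"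
  have R_sub: "subgroup R (G Mod H)"
    unfolding R_def using normal_imp_subgroup[OF Q.maximal_normal_Inter_normal] .
  have maximals: "Union ` MQ = {N. maximal_normal N G}"
    unfolding MQ_def using Union_image_maximal_normal H_max .
  have coset_in_R: "H #> x \<in> R \<longleftrightarrow> (\<forall>A \<in> MQ. x \<in> \<Union>A)" if x: "x \<in> carrier G" for x
  proof -
    have "H #> x \<in> carrier (G Mod H)"
      using x unfolding carrier_FactGroup by blast
    moreover have "H #> x \<in> A \<longleftrightarrow> x \<in> \<Union>A" if "A \<in> MQ" for A
    proof -
      have "subgroup A (G Mod H)"
        using that normal_imp_subgroup unfolding MQ_def maximal_normal_def by blast
      then show ?thesis using factgroup_subgroup_union_char x by blast
    qed
    ultimately show ?thesis
      unfolding R_def maximal_normal_Inter_def MQ_def[symmetric] by blast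
  qed
  have "\<Union>R = {x \<in> carrier G. H #> x \<in> R}"
    by (rule factgroup_subgroup_union_char[OF R_sub])
  also have "\<dots> = {x \<in> carrier G. \<forall>A \<in> MQ. x \<in> \<Union>A}"
    using coset_in_R by blast
  also have "\<dots> = carrier G \<inter> \<Inter>(Union ` MQ)"
    by blast
  also have "\<dots> = maximal_normal_Inter G"
    unfolding maximals maximal_normal_Inter_def ..
  finally show ?thesis
    using Union_eq_iff_trivial[OF R_sub] unfolding R_def by simp
qed

end

theorem theorem4:
  fixes G :: "('a, 'b) monoid_scheme"
  assumes "group G" and "finite (carrier G)"
  shows "gen_fitting G = carrier G \<longleftrightarrow>
         carrier G \<inter> \<Inter> {N. maximal_normal N G} = frattini G"
proof -
  interpret group G by fact
  interpret Phi: normal "frattini G" G by (rule frattini_normal)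
  let ?Q = "G Mod frattini G"
  interpret Q: group ?Q by (rule Phi.factorgroup_is_group)
  have "finite (carrier ?Q)"
    using assms(2) unfolding carrier_FactGroup by simp
  have "gen_fitting G = carrier G \<longleftrightarrow> socle ?Q = carrier ?Q"
    unfolding gen_fitting_def by (rule Phi.Union_eq_carrier_iff[OF Q.socle_subgroup])
  also have "\<dots> \<longleftrightarrow> maximal_normal_Inter ?Q = {\<one>\<^bsub>?Q\<^esub>}"
    by (rule Q.socle_eq_carrier_iff_maximal_normal_Inter_trivial) fact
  also have "\<dots> \<longleftrightarrow> maximal_normal_Inter G = frattini G"
    by (rule Phi.maximal_normal_Inter_FactGroup) (rule frattini_subset_maximal_normal[OF assms(2)])
  finally show ?thesis
    unfolding maximal_normal_Inter_def .
qed

end
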